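(* Let $\rho>0$ and assume $\Gamma(0)<\Gamma(1)$ and $1+\rho\ln\mu(0)>0$. Then for every $\rho$-admissible scaling $n\mapsto L_n$, \[ \lim_{n\to\infty}\mathbb{P}\big[\mathbb{M}(n;L_n)\text{ contains no isolated nodes}\big]=\begin{cases}0 & \text{if } 1+\rho\ln\Gamma(0)<0,\\ 1 & \text{if } 1+\rho\ln\Gamma(0)>0.\end{cases} \]
   Context: Homogeneous binary multiplicative attribute graph (MAG) model. Fix $\mu(0),\mu(1)\in(0,1)$ with $\mu(0)+\mu(1)=1$, and a symmetric $2\times2$ matrix $(q(a,b))_{a,b\in\{0,1\}}$ with $q(0,1)=q(1,0)$ and $0<q(a,b)<1$ for all $a,b$. On a probability space, let $\{A, A_\ell(u):\ell,u\ge1\}$ be i.i.d. $\{0,1\}$-valued with $\mathbb{P}[A=1]=\mu(1)$, $\mathbb{P}[A=0]=\mu(0)$, and independently let $\{U(u,v): 1\le u<v\}$ be i.i.d. uniform on $(0,1)$, with $U(v,u)=U(u,v)$. For $L\ge1$ put $\mathbf{A}_L(u)=(A_1(u),\dots,A_L(u))$ and $Q_L(\mathbf a,\mathbf b)=\prod_{\ell=1}^L q(a_\ell,b_\ell)$ for $\mathbf a,\mathbf b\in\{0,1\}^L$. The random graph $\mathbb{M}(n;L)$ has vertex set $\{1,\dots,n\}$ and an undirected edge between distinct $u,v$ iff $U(u,v)\le Q_L(\mathbf A_L(u),\mathbf A_L(v))$. A node is isolated if it has no neighbor. Set $\Gamma(a)=\mathbb{E}[q(a,A)]=q(a,0)\mu(0)+q(a,1)\mu(1)$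 for $a\in\{0,1\}$. For $\rho>0$, a scaling $n\mapsto L_n$ of positive integers is $\rho$-admissible if $L_n\sim\rho\ln n$ as $n\to\infty$. *)

theory Defs
  imports "HOL-Probability.Probability" "HOL-Library.Landau_Symbols"
begin

text \<open>Binary attributes are encoded as bool: False = 0, True = 1.
  mu1 = mu(1), mu(0) = 1 - mu1. q :: bool => bool => real is the affinity matrix.\<close>

definition mag_Q :: "(bool \<Rightarrow> bool \<Rightarrow> real) \<Rightarrow> nat \<Rightarrow> (nat \<times> nat \<Rightarrow> bool) \<Rightarrow> nat \<Rightarrow> nat \<Rightarrow> real" where
  "mag_Q q L A u v = (\<Prod>l\<in>{1..L}. q (A (u, l)) (A (v, l)))"

definition mag_attrs :: "real \<Rightarrow> nat \<Rightarrow> nat \<Rightarrow> (nat \<times> nat \<Rightarrow> bool) pmf" where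
  "mag_attrs mu1 n L = Pi_pmf ({1..n} \<times> {1..L}) False (\<lambda>_. bernoulli_pmf mu1)"

definition mag_edges :: "(bool \<Rightarrow> bool \<Rightarrow> real) \<Rightarrow> nat \<Rightarrow> nat \<Rightarrow> (nat \<times> nat \<Rightarrow> bool) \<Rightarrow> (nat \<times> nat \<Rightarrow> bool) pmf" where
  "mag_edges q n L A = Pi_pmf {(u, v). 1 \<le> u \<and> u < v \<and> v \<le> n} False
      (\<lambda>(u, v). bernoulli_pmf (mag_Q q L A u v))"

definition mag_adj :: "(nat \<times> nat \<Rightarrow> bool) \<Rightarrow> nat \<Rightarrow> nat \<Rightarrow> bool" where
  "mag_adj E u v = (if u < v then E (u, v) else if v < u then E (v, u) else False)"

definition no_isolated :: "nat \<Rightarrow> (nat \<times> nat \<Rightarrow> bool) \<Rightarrow> bool" where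
  "no_isolated n E = (\<forall>u\<in>{1..n}. \<exists>v\<in>{1..n}. v \<noteq> u \<and> mag_adj E u v)"

definition mag_graph :: "real \<Rightarrow> (bool \<Rightarrow> bool \<Rightarrow> real) \<Rightarrow> nat \<Rightarrow> nat \<Rightarrow> (nat \<times> nat \<Rightarrow> bool) pmf" where
  "mag_graph mu1 q n L = mag_attrs mu1 n L \<bind> mag_edges q n L"

definition prob_no_isolated :: "real \<Rightarrow> (bool \<Rightarrow> bool \<Rightarrow> real) \<Rightarrow> nat \<Rightarrow> nat \<Rightarrow> real" where
  "prob_no_isolated mu1 q n L = measure_pmf.prob (mag_graph mu1 q n L) {E. no_isolated n E}"

definition mag_Gamma :: "real \<Rightarrow> (bool \<Rightarrow> bool \<Rightarrow> real) \<Rightarrow> bool \<Rightarrow> real" where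
  "mag_Gamma mu1 q a = q a False * (1 - mu1) + q a True * mu1"

end

theory Submission
  imports Defs "HOL-Real_Asymp.Real_Asymp"
begin

(*
  Conditionally on the attribute vectors A(u), the edges are independent, so node u is
  isolated with probability prod_{v ~= u} (1 - Q(A(u), A(v))).  Averaging over the other
  nodes with A(u) = a fixed gives (1 - prod_l Gamma(a_l))^(n-1) <= (1 - Gamma(0)^L)^(n-1),
  since Gamma(0) <= Gamma(1); a union bound over u yields
    P[no isolated node] >= 1 - n (1 - Gamma(0)^L)^(n-1).
  Conversely, a node carrying the all-zero vector has a neighbour with probability at most
  sum_v Q(0, A(v)), whose mean is n Gamma(0)^L, and no node carries it with probability
  (1 - mu(0)^L)^n, so
    P[no isolated node] <= n Gamma(0)^L + (1 - mu(0)^L)^n.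
  Finally n c^(L n) = n powr (1 + rho ln c + o(1)) when L n ~ rho ln n, which sends both
  bounds to the claimed limits.
*)

section \<open>Asymptotic estimates\<close>

lemma one_minus_power_le_exp:
  fixes x :: real
  assumes "x \<le> 1"
  shows "(1 - x) ^ n \<le> exp (- (real n * x))"
proof -
  have "(1 - x) ^ n \<le> exp (- x) ^ n"
    using assms exp_ge_add_one_self[of "- x"] by (intro power_mono) auto
  then show ?thesis
    by (simp add: exp_of_nat_mult[symmetric])
qed

lemma tendsto_div_ln_of_asymp_equiv:
  assumes "(\<lambda>n. real (L n)) \<sim>[sequentially] (\<lambda>n. rho * ln (real n))"
  shows "(\<lambda>n. real (L n) / ln (real n)) \<longlonglongrightarrow> rho"
proof -
  have "(\<lambda>n. rho * ln (real n) / ln (real n)) \<sim>[sequentially] (\<lambda>n. real (L n) / ln (real n))"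
    using assms by (intro asymp_equiv_intros) (simp add: asymp_equiv_sym)
  moreover have "(\<lambda>n. rho * ln (real n) / ln (real n)) \<longlonglongrightarrow> rho"
    by (rule tendsto_eventually) (use eventually_ge_at_top[of 2] in \<open>eventually_elim, simp\<close>)
  ultimately show ?thesis
    by (rule asymp_equiv_tendsto_transfer)
qed

lemma mult_power_eq_powr:
  assumes "0 < c" "2 \<le> n"
  shows "real n * c ^ k = real n powr (1 + real k / ln (real n) * ln c)"
proof -
  have "0 < ln (real n)"
    using assms(2) by simp
  then have "real n powr (1 + real k / ln (real n) * ln c) = exp (ln (real n) + real k * ln c)"
    using assms(2) by (simp add: powr_def field_simps)
  also have "\<dots> = real n * c ^ k"
    using assms by (simp add: exp_add exp_of_nat_mult)
  finally show ?thesis ..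
qed

lemma eventually_powr_le_mult_power:
  assumes "(\<lambda>n. real (L n) / ln (real n)) \<longlonglongrightarrow> rho" "0 < c" "e < 1 + rho * ln c"
  shows "\<forall>\<^sub>F n in sequentially. real n powr e \<le> real n * c ^ L n"
proof -
  have "(\<lambda>n. 1 + real (L n) / ln (real n) * ln c) \<longlonglongrightarrow> 1 + rho * ln c"
    using assms(1) by (intro tendsto_intros)
  then have "\<forall>\<^sub>F n in sequentially. e < 1 + real (L n) / ln (real n) * ln c"
    using assms(3) by (rule order_tendstoD)
  then show ?thesis
    using eventually_ge_at_top[of 2]
    by eventually_elim (simp add: mult_power_eq_powr[OF assms(2)] powr_mono)
qed

lemma eventually_mult_power_le_powr:
  assumes "(\<lambda>n. real (L n) / ln (real n)) \<longlonglongrightarrow> rho" "0 < c" "1 + rho * ln c < e"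
  shows "\<forall>\<^sub>F n in sequentially. real n * c ^ L n \<le> real n powr e"
proof -
  have "(\<lambda>n. 1 + real (L n) / ln (real n) * ln c) \<longlonglongrightarrow> 1 + rho * ln c"
    using assms(1) by (intro tendsto_intros)
  then have "\<forall>\<^sub>F n in sequentially. 1 + real (L n) / ln (real n) * ln c < e"
    using assms(3) by (rule order_tendstoD)
  then show ?thesis
    using eventually_ge_at_top[of 2]
    by eventually_elim (simp add: mult_power_eq_powr[OF assms(2)] powr_mono)
qed

lemma mult_power_tendsto_0:
  assumes r: "(\<lambda>n. real (L n) / ln (real n)) \<longlonglongrightarrow> rho" and "0 < c" "1 + rho * ln c < 0"
  shows "(\<lambda>n. real n * c ^ L n) \<longlonglongrightarrow> 0"
proof -
  obtain e where e: "1 + rho * ln c < e" "e < 0"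
    using assms(3) dense by blast
  show ?thesis
  proof (rule tendsto_sandwich[where f = "\<lambda>_. 0"])
    show "\<forall>\<^sub>F n in sequentially. real n * c ^ L n \<le> real n powr e"
      using r \<open>0 < c\<close> e(1) by (rule eventually_mult_power_le_powr)
    show "(\<lambda>n. real n powr e) \<longlonglongrightarrow> 0"
      using e(2) by real_asymp
  qed (use \<open>0 < c\<close> in auto)
qed

lemma mult_one_minus_power_tendsto_0:
  assumes r: "(\<lambda>n. real (L n) / ln (real n)) \<longlonglongrightarrow> rho" and "0 < c" "c \<le> 1" "0 < 1 + rho * ln c"
  shows "(\<lambda>n. real n * (1 - c ^ L n) ^ (n - 1)) \<longlonglongrightarrow> 0"
proof -
  obtain e where e: "0 < e" "e < 1 + rho * ln c"
    using assms(4) dense by blast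
  show ?thesis
  proof (rule tendsto_sandwich[where f = "\<lambda>_. 0"])
    show "\<forall>\<^sub>F n in sequentially. real n * (1 - c ^ L n) ^ (n - 1) \<le> real n * exp (- (real n powr e) / 2)"
      using eventually_powr_le_mult_power[OF r \<open>0 < c\<close> e(2)] eventually_ge_at_top[of 2]
    proof eventually_elim
      case (elim n)
      have "(1 - c ^ L n) ^ (n - 1) \<le> exp (- (real (n - 1) * c ^ L n))"
        using assms(2,3) by (intro one_minus_power_le_exp power_le_one) auto
      also have "\<dots> \<le> exp (- (real n * c ^ L n) / 2)"
        using elim(2) assms(2) by simp
      also have "\<dots> \<le> exp (- (real n powr e) / 2)"
        using elim(1) by simp
      finally show ?case
        by (simp add: mult_left_mono)
    qed
    show "(\<lambda>n. real n * exp (- (real n powr e) / 2)) \<longlonglongrightarrow> 0"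
      using e(1) by real_asymp
  qed (use assms(2,3) in \<open>simp_all add: power_le_one\<close>)
qed

section \<open>Products of PMFs\<close>

lemma Pi_pmf_Times:
  assumes "finite V" "finite J"
  shows "Pi_pmf (V \<times> J) d (\<lambda>_. p) =
     map_pmf case_prod (Pi_pmf V (\<lambda>_. d) (\<lambda>_. Pi_pmf J d (\<lambda>_. p)))"
proof (rule pmf_eqI)
  fix A :: "'a \<times> 'b \<Rightarrow> 'c"
  have "inj (case_prod :: ('a \<Rightarrow> 'b \<Rightarrow> 'c) \<Rightarrow> _)"
    by (intro injI) (metis curry_case_prod)
  have "pmf (Pi_pmf (V \<times> J) d (\<lambda>_. p)) A
        = pmf (Pi_pmf V (\<lambda>_. d) (\<lambda>_. Pi_pmf J d (\<lambda>_. p))) (curry A)"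
    using assms by (auto simp: pmf_Pi prod.cartesian_product fun_eq_iff intro!: prod_zero)
  also have "\<dots> = pmf (map_pmf case_prod (Pi_pmf V (\<lambda>_. d) (\<lambda>_. Pi_pmf J d (\<lambda>_. p)))) A"
    using \<open>inj case_prod\<close> by (metis case_prod_curry pmf_map_inj')
  finally show "pmf (Pi_pmf (V \<times> J) d (\<lambda>_. p)) A = \<dots>" .
qed

lemma expectation_bind_pmf:
  fixes h :: "'b \<Rightarrow> real"
  assumes "\<And>y. \<bar>h y\<bar> \<le> B"
  shows "measure_pmf.expectation (M \<bind> N) h =
           measure_pmf.expectation M (\<lambda>x. measure_pmf.expectation (N x) h)"
  unfolding measure_pmf_bind
  by (rule integral_bind[where K = "count_space UNIV" and B = B and B' = 1])
     (auto simp: assms measure_pmf.emeasure_space_1 measure_pmf_in_subprob_space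
        intro: prob_space_imp_subprob_space measure_pmf.finite_measure_axioms)

lemma measure_pmf_prob_bind:
  "measure_pmf.prob (M \<bind> N) X = measure_pmf.expectation M (\<lambda>x. measure_pmf.prob (N x) X)"
  using expectation_bind_pmf[of "indicator X" 1 M N] by simp

lemma expectation_Pi_pmf_insert:
  fixes h :: "('a \<Rightarrow> 'b) \<Rightarrow> real"
  assumes "finite A" "x \<notin> A" "\<And>f. \<bar>h f\<bar> \<le> B"
  shows "measure_pmf.expectation (Pi_pmf (insert x A) d p) h =
           measure_pmf.expectation (p x)
             (\<lambda>y. measure_pmf.expectation (Pi_pmf A d p) (\<lambda>f. h (f(x := y))))"
  using assms by (simp add: Pi_pmf_insert' expectation_bind_pmf[where B = B])

section \<open>Random graphs with independent edges\<close>

lemma Weierstrass_product_inequality: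
  fixes x :: "'a \<Rightarrow> real"
  assumes "\<And>i. i \<in> S \<Longrightarrow> 0 \<le> x i \<and> x i \<le> 1"
  shows "1 - (\<Sum>i\<in>S. x i) \<le> (\<Prod>i\<in>S. 1 - x i)"
  using assms
proof (induction S rule: infinite_finite_induct)
  case (insert a S)
  have "0 \<le> (\<Prod>i\<in>S. 1 - x i)" "(\<Prod>i\<in>S. 1 - x i) \<le> 1" "0 \<le> x a"
    using insert.prems by (auto intro!: prod_nonneg prod_le_1)
  then have "1 - x a - (\<Sum>i\<in>S. x i) \<le> (1 - x a) * (\<Prod>i\<in>S. 1 - x i)"
    using insert by (simp add: algebra_simps) (smt (verit) mult_left_le)
  then show ?case
    using insert.hyps by simp
qed auto

definition edge_pmf :: "nat \<Rightarrow> (nat \<Rightarrow> nat \<Rightarrow> real) \<Rightarrow> (nat \<times> nat \<Rightarrow> bool) pmf" where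
  "edge_pmf n P = Pi_pmf {(u, v). 1 \<le> u \<and> u < v \<and> v \<le> n} False (\<lambda>(u, v). bernoulli_pmf (P u v))"

definition isolated :: "nat \<Rightarrow> (nat \<times> nat \<Rightarrow> bool) \<Rightarrow> nat \<Rightarrow> bool" where
  "isolated n E u \<longleftrightarrow> (\<forall>v\<in>{1..n}. v \<noteq> u \<longrightarrow> \<not> mag_adj E u v)"

lemma prob_isolated_edge_pmf:
  assumes u: "u \<in> {1..n}" and P01: "\<And>a b. 0 \<le> P a b \<and> P a b \<le> 1"
    and P_sym: "\<And>a b. P a b = P b a"
  shows "measure_pmf.prob (edge_pmf n P) {E. isolated n E u} = (\<Prod>v\<in>{1..n} - {u}. 1 - P u v)"
proof -
  define I where "I = {(a, b). 1 \<le> a \<and> a < b \<and> b \<le> n}"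
  define I\<^sub>u where "I\<^sub>u = {i \<in> I. fst i = u \<or> snd i = u}"
  define B where "B = (\<lambda>i::nat \<times> nat. if i \<in> I\<^sub>u then {False} else UNIV)"
  have "finite I"
    by (rule finite_subset[of _ "{1..n} \<times> {1..n}"]) (auto simp: I_def)
  have "{E. isolated n E u} = Pi I B"
    using u unfolding isolated_def mag_adj_def Pi_def B_def I\<^sub>u_def I_def
    by (auto split: if_splits)
  then have "measure_pmf.prob (edge_pmf n P) {E. isolated n E u}
      = (\<Prod>i\<in>I. measure_pmf.prob (bernoulli_pmf (P (fst i) (snd i))) (B i))"
    unfolding edge_pmf_def I_def[symmetric] using \<open>finite I\<close>
    by (simp add: measure_Pi_pmf_Pi case_prod_beta)
  also have "\<dots> = (\<Prod>i\<in>I. if i \<in> I\<^sub>u then 1 - P (fst i) (snd i) else 1)"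
    using P01 by (intro prod.cong) (auto simp: B_def measure_pmf_single)
  also have "\<dots> = (\<Prod>i\<in>I\<^sub>u. 1 - P (fst i) (snd i))"
    using \<open>finite I\<close> by (simp add: I\<^sub>u_def prod.inter_filter)
  also have "\<dots> = (\<Prod>v\<in>{1..n} - {u}. 1 - P u v)"
  proof (rule prod.reindex_bij_witness[where i = "\<lambda>v. (min u v, max u v)"
        and j = "\<lambda>i. if fst i = u then snd i else fst i"])
  qed (use u in \<open>auto simp: I\<^sub>u_def I_def min_def max_def P_sym\<close>)
  finally show ?thesis .
qed

lemma prob_no_isolated_edge_pmf_ge:
  assumes "\<And>a b. 0 \<le> P a b \<and> P a b \<le> 1" "\<And>a b. P a b = P b a"
  shows "1 - (\<Sum>u\<in>{1..n}. \<Prod>v\<in>{1..n} - {u}. 1 - P u v)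
           \<le> measure_pmf.prob (edge_pmf n P) {E. no_isolated n E}"
proof -
  let ?M = "edge_pmf n P"
  have "{E. no_isolated n E} = UNIV - (\<Union>u\<in>{1..n}. {E. isolated n E u})"
    by (auto simp: no_isolated_def isolated_def)
  then have "measure_pmf.prob ?M {E. no_isolated n E}
      = 1 - measure_pmf.prob ?M (\<Union>u\<in>{1..n}. {E. isolated n E u})"
    using measure_pmf.prob_compl[of "\<Union>u\<in>{1..n}. {E. isolated n E u}" ?M] by simp
  moreover have "measure_pmf.prob ?M (\<Union>u\<in>{1..n}. {E. isolated n E u})
      \<le> (\<Sum>u\<in>{1..n}. measure_pmf.prob ?M {E. isolated n E u})"
    by (rule measure_pmf.finite_measure_subadditive_finite) auto
  ultimately show ?thesis
    using assms by (simp add: prob_isolated_edge_pmf)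
qed

lemma prob_no_isolated_edge_pmf_le:
  assumes "u \<in> {1..n}" "\<And>a b. 0 \<le> P a b \<and> P a b \<le> 1" "\<And>a b. P a b = P b a"
  shows "measure_pmf.prob (edge_pmf n P) {E. no_isolated n E} \<le> (\<Sum>v\<in>{1..n} - {u}. P u v)"
proof -
  let ?M = "edge_pmf n P"
  have "{E. no_isolated n E} \<subseteq> UNIV - {E. isolated n E u}"
    using assms(1) by (auto simp: no_isolated_def isolated_def)
  then have "measure_pmf.prob ?M {E. no_isolated n E} \<le> measure_pmf.prob ?M (UNIV - {E. isolated n E u})"
    by (rule measure_pmf.finite_measure_mono) auto
  also have "\<dots> = 1 - measure_pmf.prob ?M {E. isolated n E u}"
    using measure_pmf.prob_compl[of "{E. isolated n E u}" ?M] by simp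
  also have "\<dots> \<le> (\<Sum>v\<in>{1..n} - {u}. P u v)"
    using assms Weierstrass_product_inequality[of "{1..n} - {u}" "P u"]
    by (simp add: prob_isolated_edge_pmf)
  finally show ?thesis .
qed

section \<open>The binary MAG model\<close>

definition attr_vector_pmf :: "real \<Rightarrow> nat \<Rightarrow> (nat \<Rightarrow> bool) pmf" where
  "attr_vector_pmf mu1 L = Pi_pmf {1..L} False (\<lambda>_. bernoulli_pmf mu1)"

definition attr_vectors_pmf :: "real \<Rightarrow> nat \<Rightarrow> nat \<Rightarrow> (nat \<Rightarrow> nat \<Rightarrow> bool) pmf" where
  "attr_vectors_pmf mu1 n L = Pi_pmf {1..n} (\<lambda>_. False) (\<lambda>_. attr_vector_pmf mu1 L)"

definition affinity :: "(bool \<Rightarrow> bool \<Rightarrow> real) \<Rightarrow> nat \<Rightarrow> (nat \<Rightarrow> bool) \<Rightarrow> (nat \<Rightarrow> bool) \<Rightarrow> real" where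
  "affinity q L a b = (\<Prod>l\<in>{1..L}. q (a l) (b l))"

lemma finite_set_attr_vector_pmf [simp]: "finite (set_pmf (attr_vector_pmf mu1 L))"
  by (auto simp: attr_vector_pmf_def set_Pi_pmf)

lemma finite_set_attr_vectors_pmf [simp]: "finite (set_pmf (attr_vectors_pmf mu1 n L))"
  by (auto simp: attr_vectors_pmf_def set_Pi_pmf)

lemma integrable_attr_vector_pmf [simp]:
  "integrable (measure_pmf (attr_vector_pmf mu1 L)) (f :: _ \<Rightarrow> real)"
  by (simp add: integrable_measure_pmf_finite)

lemma integrable_attr_vectors_pmf [simp]:
  "integrable (measure_pmf (attr_vectors_pmf mu1 n L)) (f :: _ \<Rightarrow> real)"
  by (simp add: integrable_measure_pmf_finite)

lemma mag_graph_eq_bind: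
  "mag_graph mu1 q n L =
     attr_vectors_pmf mu1 n L \<bind> (\<lambda>G. edge_pmf n (\<lambda>u v. affinity q L (G u) (G v)))"
  unfolding mag_graph_def mag_attrs_def attr_vectors_pmf_def attr_vector_pmf_def
  by (subst Pi_pmf_Times)
     (auto simp: bind_map_pmf mag_edges_def edge_pmf_def mag_Q_def affinity_def)

lemma prob_no_isolated_eq_expectation:
  "prob_no_isolated mu1 q n L = measure_pmf.expectation (attr_vectors_pmf mu1 n L)
     (\<lambda>G. measure_pmf.prob (edge_pmf n (\<lambda>u v. affinity q L (G u) (G v))) {E. no_isolated n E})"
  unfolding prob_no_isolated_def mag_graph_eq_bind by (rule measure_pmf_prob_bind)

lemma expectation_attr_vectors_component:
  fixes f :: "(nat \<Rightarrow> bool) \<Rightarrow> real"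
  assumes "v \<in> {1..n}"
  shows "measure_pmf.expectation (attr_vectors_pmf mu1 n L) (\<lambda>G. f (G v))
           = measure_pmf.expectation (attr_vector_pmf mu1 L) f"
proof -
  have "map_pmf (\<lambda>G. G v) (attr_vectors_pmf mu1 n L) = attr_vector_pmf mu1 L"
    using assms by (simp add: attr_vectors_pmf_def Pi_pmf_component)
  then show ?thesis
    by (metis integral_map_pmf)
qed

lemma prob_no_zero_attr_vector:
  assumes "0 \<le> mu1" "mu1 \<le> 1"
  shows "measure_pmf.prob (attr_vectors_pmf mu1 n L) (Pi {1..n} (\<lambda>_. - {a. \<forall>l\<in>{1..L}. \<not> a l}))
           = (1 - (1 - mu1) ^ L) ^ n"
proof -
  let ?Z = "{a. \<forall>l\<in>{1..L}. \<not> a l}"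
  have "?Z = Pi {1..L} (\<lambda>_. {False})"
    by (auto simp: Pi_def)
  then have "measure_pmf.prob (attr_vector_pmf mu1 L) ?Z = (1 - mu1) ^ L"
    using assms by (simp add: attr_vector_pmf_def measure_Pi_pmf_Pi measure_pmf_single)
  then have "measure_pmf.prob (attr_vector_pmf mu1 L) (- ?Z) = 1 - (1 - mu1) ^ L"
    using measure_pmf.prob_compl[of ?Z "attr_vector_pmf mu1 L"] by (simp add: Compl_eq_Diff_UNIV)
  then show ?thesis
    by (simp add: attr_vectors_pmf_def measure_Pi_pmf_Pi)
qed

locale binary_mag =
  fixes mu1 :: real and q :: "bool \<Rightarrow> bool \<Rightarrow> real"
  assumes mu1_bounds: "0 < mu1" "mu1 < 1"
    and q_False_True: "q False True = q True False"
    and q_bounds: "\<And>a b. 0 < q a b \<and> q a b < 1"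
begin

lemma q_commute: "q a b = q b a"
  using q_False_True by (cases a; cases b) auto

lemma affinity_bounds: "0 \<le> affinity q L a b \<and> affinity q L a b \<le> 1"
  using q_bounds by (auto simp: affinity_def less_imp_le intro!: prod_nonneg prod_le_1)

lemma affinity_commute: "affinity q L a b = affinity q L b a"
  by (simp add: affinity_def q_commute)

lemma Gamma_bounds: "0 < mag_Gamma mu1 q a \<and> mag_Gamma mu1 q a < 1"
proof -
  have "q a False * (1 - mu1) + q a True * mu1 < 1 * (1 - mu1) + 1 * mu1"
    using q_bounds mu1_bounds by (intro add_strict_mono mult_strict_right_mono) auto
  then show ?thesis
    using q_bounds[of a] mu1_bounds by (auto simp: mag_Gamma_def intro!: add_pos_pos)
qed

lemma expectation_affinity:
  "measure_pmf.expectation (attr_vector_pmf mu1 L) (affinity q L a) = (\<Prod>l\<in>{1..L}. mag_Gamma mu1 q (a l))"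
proof -
  have "measure_pmf.expectation (attr_vector_pmf mu1 L) (affinity q L a) =
      (\<Prod>l\<in>{1..L}. measure_pmf.expectation (bernoulli_pmf mu1) (q (a l)))"
    unfolding attr_vector_pmf_def affinity_def
    by (rule expectation_prod_Pi_pmf) (auto intro: integrable_measure_pmf_finite less_imp_le simp: q_bounds)
  then show ?thesis
    using mu1_bounds by (simp add: mag_Gamma_def add.commute)
qed

lemma power_Gamma_le_prod_Gamma:
  assumes "mag_Gamma mu1 q False \<le> mag_Gamma mu1 q True"
  shows "mag_Gamma mu1 q False ^ L \<le> (\<Prod>l\<in>{1..L}. mag_Gamma mu1 q (a l))"
proof -
  have "mag_Gamma mu1 q False \<le> mag_Gamma mu1 q b" for b
    using assms by (cases b) auto
  then have "(\<Prod>l\<in>{1..L}. mag_Gamma mu1 q False) \<le> (\<Prod>l\<in>{1..L}. mag_Gamma mu1 q (a l))"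
    using Gamma_bounds by (intro prod_mono) (auto intro: less_imp_le)
  then show ?thesis
    by simp
qed

lemma expectation_non_adjacent:
  assumes "finite V"
  shows "measure_pmf.expectation (Pi_pmf V (\<lambda>_. False) (\<lambda>_. attr_vector_pmf mu1 L))
           (\<lambda>G. \<Prod>v\<in>V. 1 - affinity q L a (G v))
         = (1 - (\<Prod>l\<in>{1..L}. mag_Gamma mu1 q (a l))) ^ card V"
proof -
  have "measure_pmf.expectation (Pi_pmf V (\<lambda>_. False) (\<lambda>_. attr_vector_pmf mu1 L))
          (\<lambda>G. \<Prod>v\<in>V. 1 - affinity q L a (G v))
      = (\<Prod>v\<in>V. measure_pmf.expectation (attr_vector_pmf mu1 L) (\<lambda>b. 1 - affinity q L a b))"
    using assms affinity_bounds by (intro expectation_prod_Pi_pmf) auto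
  then show ?thesis
    by (simp add: expectation_affinity)
qed

lemma expectation_isolated_le:
  assumes "mag_Gamma mu1 q False \<le> mag_Gamma mu1 q True" and u: "u \<in> {1..n}"
  shows "measure_pmf.expectation (attr_vectors_pmf mu1 n L)
           (\<lambda>G. \<Prod>v\<in>{1..n} - {u}. 1 - affinity q L (G u) (G v))
         \<le> (1 - mag_Gamma mu1 q False ^ L) ^ (n - 1)"
proof -
  let ?p = "attr_vector_pmf mu1 L" and ?V = "{1..n} - {u}"
  let ?F = "\<lambda>G. \<Prod>v\<in>?V. 1 - affinity q L (G u) (G v)"
  have "0 \<le> ?F G \<and> ?F G \<le> 1" for G
    using affinity_bounds by (auto intro!: prod_nonneg prod_le_1)
  then have F_bounds: "\<bar>?F G\<bar> \<le> 1" for G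
    by (simp add: abs_le_iff)
  have "measure_pmf.expectation (attr_vectors_pmf mu1 n L) ?F
      = measure_pmf.expectation (Pi_pmf (insert u ?V) (\<lambda>_. False) (\<lambda>_. ?p)) ?F"
    using u by (simp add: attr_vectors_pmf_def insert_absorb)
  also have "\<dots> = measure_pmf.expectation ?p
      (\<lambda>a. measure_pmf.expectation (Pi_pmf ?V (\<lambda>_. False) (\<lambda>_. ?p)) (\<lambda>G. ?F (G(u := a))))"
    using F_bounds by (intro expectation_Pi_pmf_insert) auto
  also have "\<dots> = measure_pmf.expectation ?p (\<lambda>a. (1 - (\<Prod>l\<in>{1..L}. mag_Gamma mu1 q (a l))) ^ (n - 1))"
    using u by (simp add: expectation_non_adjacent flip: One_nat_def)
  also have "\<dots> \<le> measure_pmf.expectation ?p (\<lambda>_. (1 - mag_Gamma mu1 q False ^ L) ^ (n - 1))"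
    using power_Gamma_le_prod_Gamma[OF assms(1)] Gamma_bounds
    by (intro Bochner_Integration.integral_mono power_mono) (auto simp: less_imp_le prod_le_1)
  finally show ?thesis
    by simp
qed

lemma prob_no_isolated_ge:
  assumes "mag_Gamma mu1 q False \<le> mag_Gamma mu1 q True"
  shows "1 - real n * (1 - mag_Gamma mu1 q False ^ L) ^ (n - 1) \<le> prob_no_isolated mu1 q n L"
proof -
  let ?G = "attr_vectors_pmf mu1 n L"
  let ?iso = "\<lambda>G u. \<Prod>v\<in>{1..n} - {u}. 1 - affinity q L (G u) (G v)"
  have "1 - real n * (1 - mag_Gamma mu1 q False ^ L) ^ (n - 1)
      = 1 - (\<Sum>u\<in>{1..n}. (1 - mag_Gamma mu1 q False ^ L) ^ (n - 1))"
    by simp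
  also have "\<dots> \<le> 1 - (\<Sum>u\<in>{1..n}. measure_pmf.expectation ?G (\<lambda>G. ?iso G u))"
    using expectation_isolated_le[OF assms] by (intro diff_left_mono sum_mono) auto
  also have "\<dots> = measure_pmf.expectation ?G (\<lambda>G. 1 - (\<Sum>u\<in>{1..n}. ?iso G u))"
    by (simp add: Bochner_Integration.integral_sum del: One_nat_def)
  also have "\<dots> \<le> measure_pmf.expectation ?G (\<lambda>G.
      measure_pmf.prob (edge_pmf n (\<lambda>u v. affinity q L (G u) (G v))) {E. no_isolated n E})"
    by (intro Bochner_Integration.integral_mono prob_no_isolated_edge_pmf_ge)
       (auto simp: affinity_bounds affinity_commute)
  also have "\<dots> = prob_no_isolated mu1 q n L"
    by (rule prob_no_isolated_eq_expectation[symmetric])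
  finally show ?thesis .
qed

lemma prob_no_isolated_given_attrs_le:
  "measure_pmf.prob (edge_pmf n (\<lambda>u v. affinity q L (G u) (G v))) {E. no_isolated n E}
     \<le> (\<Sum>v\<in>{1..n}. affinity q L (\<lambda>_. False) (G v))
        + indicator (Pi {1..n} (\<lambda>_. - {a. \<forall>l\<in>{1..L}. \<not> a l})) G"
proof (cases "\<exists>u\<in>{1..n}. \<forall>l\<in>{1..L}. \<not> G u l")
  case True
  then obtain u where u: "u \<in> {1..n}" "\<forall>l\<in>{1..L}. \<not> G u l" by blast
  have "measure_pmf.prob (edge_pmf n (\<lambda>u v. affinity q L (G u) (G v))) {E. no_isolated n E}
      \<le> (\<Sum>v\<in>{1..n} - {u}. affinity q L (G u) (G v))"
    using u(1) by (rule prob_no_isolated_edge_pmf_le) (auto simp: affinity_bounds affinity_commute)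
  also have "\<dots> = (\<Sum>v\<in>{1..n} - {u}. affinity q L (\<lambda>_. False) (G v))"
    using u(2) by (simp add: affinity_def)
  also have "\<dots> \<le> (\<Sum>v\<in>{1..n}. affinity q L (\<lambda>_. False) (G v))"
    by (rule sum_mono2) (auto simp: affinity_bounds)
  finally show ?thesis
    by (simp add: add_increasing2)
next
  case False
  then show ?thesis
    using affinity_bounds measure_pmf.prob_le_1
    by (auto simp: Pi_def add_increasing sum_nonneg)
qed

lemma prob_no_isolated_le:
  "prob_no_isolated mu1 q n L \<le> real n * mag_Gamma mu1 q False ^ L + (1 - (1 - mu1) ^ L) ^ n"
proof -
  let ?G = "attr_vectors_pmf mu1 n L" and ?N = "Pi {1..n} (\<lambda>_. - {a. \<forall>l\<in>{1..L}. \<not> a l})"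
  have "prob_no_isolated mu1 q n L \<le> measure_pmf.expectation ?G
      (\<lambda>G. (\<Sum>v\<in>{1..n}. affinity q L (\<lambda>_. False) (G v)) + indicator ?N G)"
    unfolding prob_no_isolated_eq_expectation
    by (intro Bochner_Integration.integral_mono prob_no_isolated_given_attrs_le) auto
  also have "\<dots> = (\<Sum>v\<in>{1..n}. measure_pmf.expectation (attr_vector_pmf mu1 L) (affinity q L (\<lambda>_. False)))
      + measure_pmf.prob ?G ?N"
    by (simp add: Bochner_Integration.integral_sum expectation_attr_vectors_component del: One_nat_def)
  also have "\<dots> = real n * mag_Gamma mu1 q False ^ L + (1 - (1 - mu1) ^ L) ^ n"
    using prob_no_zero_attr_vector[of mu1 n L] mu1_bounds by (simp add: expectation_affinity)
  finally show ?thesis .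
qed

lemma prob_no_isolated_tendsto_0:
  assumes r: "(\<lambda>n. real (L n) / ln (real n)) \<longlonglongrightarrow> rho"
    and "0 < 1 + rho * ln (1 - mu1)" and "1 + rho * ln (mag_Gamma mu1 q False) < 0"
  shows "(\<lambda>n. prob_no_isolated mu1 q n (L n)) \<longlonglongrightarrow> 0"
proof -
  let ?c = "1 - mu1"
  have c: "0 < ?c" "?c \<le> 1"
    using mu1_bounds by auto
  \<comment> \<open>\<open>(1 - x) ^ n \<le> n * (1 - x) ^ (n - 1)\<close> reduces this to the estimate of the other regime\<close>
  have "(\<lambda>n. (1 - ?c ^ L n) ^ n) \<longlonglongrightarrow> 0"
  proof (rule tendsto_sandwich[where f = "\<lambda>_. 0"])
    show "\<forall>\<^sub>F n in sequentially. (1 - ?c ^ L n) ^ n \<le> real n * (1 - ?c ^ L n) ^ (n - 1)"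
      using eventually_ge_at_top[of 1]
    proof eventually_elim
      case (elim n)
      have x: "0 \<le> 1 - ?c ^ L n" "1 - ?c ^ L n \<le> 1"
        using c by (auto intro: power_le_one)
      have "(1 - ?c ^ L n) ^ n = (1 - ?c ^ L n) * (1 - ?c ^ L n) ^ (n - 1)"
        using elim by (simp add: power_eq_if)
      also have "\<dots> \<le> real n * (1 - ?c ^ L n) ^ (n - 1)"
        using elim x by (intro mult_right_mono zero_le_power) auto
      finally show ?case .
    qed
  qed (use c mult_one_minus_power_tendsto_0[OF r c assms(2)] in \<open>simp_all add: power_le_one\<close>)
  then have bound: "(\<lambda>n. real n * mag_Gamma mu1 q False ^ L n + (1 - ?c ^ L n) ^ n) \<longlonglongrightarrow> 0"
    using tendsto_add[OF mult_power_tendsto_0[OF r _ assms(3)]] Gamma_bounds by simp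
  show ?thesis
  proof (rule tendsto_sandwich[OF _ _ tendsto_const bound])
    show "\<forall>\<^sub>F n in sequentially. prob_no_isolated mu1 q n (L n)
        \<le> real n * mag_Gamma mu1 q False ^ L n + (1 - ?c ^ L n) ^ n"
      by (intro always_eventually allI prob_no_isolated_le)
  qed (simp add: prob_no_isolated_def)
qed

lemma prob_no_isolated_tendsto_1:
  assumes r: "(\<lambda>n. real (L n) / ln (real n)) \<longlonglongrightarrow> rho"
    and "mag_Gamma mu1 q False \<le> mag_Gamma mu1 q True" and "0 < 1 + rho * ln (mag_Gamma mu1 q False)"
  shows "(\<lambda>n. prob_no_isolated mu1 q n (L n)) \<longlonglongrightarrow> 1"
proof -
  let ?g = "mag_Gamma mu1 q False"
  have "(\<lambda>n. 1 - real n * (1 - ?g ^ L n) ^ (n - 1)) \<longlonglongrightarrow> 1 - 0"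
    using Gamma_bounds[of False]
    by (intro tendsto_diff tendsto_const mult_one_minus_power_tendsto_0[OF r _ _ assms(3)]) auto
  then have bound: "(\<lambda>n. 1 - real n * (1 - ?g ^ L n) ^ (n - 1)) \<longlonglongrightarrow> 1"
    by simp
  show ?thesis
  proof (rule tendsto_sandwich[OF _ _ bound tendsto_const])
    show "\<forall>\<^sub>F n in sequentially. 1 - real n * (1 - ?g ^ L n) ^ (n - 1) \<le> prob_no_isolated mu1 q n (L n)"
      using assms(2) by (intro always_eventually allI prob_no_isolated_ge)
  qed (simp add: prob_no_isolated_def)
qed

end

theorem theorem1:
  fixes mu1 rho :: real and q :: "bool \<Rightarrow> bool \<Rightarrow> real" and L :: "nat \<Rightarrow> nat"
  assumes "0 < mu1" and "mu1 < 1"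
    and "q False True = q True False"
    and "\<And>a b. 0 < q a b \<and> q a b < 1"
    and "rho > 0"
    and "mag_Gamma mu1 q False < mag_Gamma mu1 q True"
    and "1 + rho * ln (1 - mu1) > 0"
    and "\<And>n. L n \<ge> 1"
    and "(\<lambda>n. real (L n)) \<sim>[sequentially] (\<lambda>n. rho * ln (real n))"
  shows "(1 + rho * ln (mag_Gamma mu1 q False) < 0 \<longrightarrow>
            (\<lambda>n. prob_no_isolated mu1 q n (L n)) \<longlonglongrightarrow> 0)
       \<and> (1 + rho * ln (mag_Gamma mu1 q False) > 0 \<longrightarrow>
            (\<lambda>n. prob_no_isolated mu1 q n (L n)) \<longlonglongrightarrow> 1)"
proof -
  interpret binary_mag mu1 q
    using assms(1-4) by unfold_locales
  have r: "(\<lambda>n. real (L n) / ln (real n)) \<longlonglongrightarrow> rho"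
    using assms(9) by (rule tendsto_div_ln_of_asymp_equiv)
  show ?thesis
    using prob_no_isolated_tendsto_0[OF r assms(7)]
      prob_no_isolated_tendsto_1[OF r less_imp_le[OF assms(6)]] by blast
qed

end
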